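(* Let $D$ be a CAEXT derivation ending in a configuration $C=\langle A,\mathcal I,\pi\rangle\neq\mathsf{unsat}$. Then for all array terms $a$ and propagated terms $t$ (reads $b[i]$ or constant arrays $\langle v\rangle$): if $\mathcal I\neq\mathcal I_0$ and $\mathcal R(a,t)\neq()$, then $\mathcal I\models\mathcal R(a,t)$ (in the empty theory).
   Context: Theory. Many-sorted first-order logic with equality. There is an index sort $\sigma$, an element sort $\tau$, and an array sort $(\sigma\to\tau)$, with function symbols: read $a[i]$, write $a\langle i\triangleleft u\rangle$, and constant array $\langle v\rangle$. The empty theory treats all these symbols (and the array sort) as uninterpreted. $T(A)$ is the set of terms occurring in $A$, $T_{\mathcal A}(A)$ the set of array terms in $A$, and $W(A)=\{a\langle i\triangleleft u\rangle[i]\approx u \mid a\langle i\triangleleft u\rangle\in T(A)\}$. Configurations. A configuration is either $\mathsf{unsat}$ or a triple $\langle A,\mathcal I,\pi\rangle$ where $A$ is a set of formulas (with flat literals), $\mathcal I$ is either $\mathcal I_0=\mathsf{none}$ or an interpretation in the empty theory satisfying $A$, and $\pi$ maps pairs $(a,t)$ ($a$ an array term, $t$ a read term $b[i]$ or a constant array term $\langle v\rangle$) to either the undefined value $()$ or a pair $(r,c)$ with $r$ a formula and $c$ an array term. $\pi_0$ maps every pair to $()$; the initial configuration for $A$ is $\langle A,\mathcal I_0,\pi_0\rangle$. Reasons. $\mathcal R(a,t)=()$ if $\pi(a,t)=()$; otherwise $\mathcal R(a,t)=\top$ if $t=a$ or $t=a[i]$ for some $i$; otherwise $\mathcal R(a,t)=\mathcal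 R(c,t)\wedge r$ where $\pi(a,t)=(r,c)$. Updated indices $I(a,\langle v\rangle)$: $()$ if $\pi(a,\langle v\rangle)=()$; $\emptyset$ if $a=\langle v\rangle$; $I(b,\langle v\rangle)\cup\{j\}$ if $\pi(a,\langle v\rangle)=(\top,b)$ with $b=a\langle j\triangleleft u\rangle$ or $a=b\langle j\triangleleft u\rangle$; otherwise $I(c,\langle v\rangle)$ where $\pi(a,\langle v\rangle)=(r,c)$. "$\mathcal I\models\varphi$" refers to the current $\mathcal I$ (empty theory); such premises require $\mathcal I\ne\mathcal I_0$. "Reset" means $(\mathcal I,\pi):=(\mathcal I_0,\pi_0)$. Rules of CAEXT: Interp: if $\mathcal I=\mathcal I_0$ and $\mathcal I'\models A\cup W(A)$ in the empty theory, set $\mathcal I:=\mathcal I'$. Conf: if $A\cup W(A)$ is empty-theory unsatisfiable, derive $\mathsf{unsat}$. InitR: $a[i]\in T(A)$ ⟹ $\pi(a,a[i]):=(\top,a)$. InitW: $s=a\langle i\triangleleft u\rangle\in T(A)$ ⟹ $\pi(s,s[i]):=(\top,s)$. RowD: $\mathcal I\models i\not\approx j$, $\pi(a\langle j\triangleleft u\rangle,b[i])\ne()$, $\pi(a,b[i])=()$ ⟹ $\pi(a,b[i]):=(i\not\approx j,a\langle j\triangleleft u\rangle)$. RowU: $\mathcal I\models i\not\approx j$, $a\langle j\triangleleft u\rangle\in T(A)$, $\pi(a,b[i])\ne()$, $\pi(a\langle j\triangleleft u\rangle,b[i])=()$ ⟹ $\pi(a\langle j\triangleleft u\rangle,b[i]):=(i\not\approx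 j,a)$. EqR: $\mathcal I\models a\approx c$, $a,c\in T_{\mathcal A}(A)$, $a\approx c\in T(A)$, $\pi(a,b[i])\ne()$, $\pi(c,b[i])=()$ ⟹ $\pi(c,b[i]):=(a\approx c,a)$. EqL: symmetric, $\pi(a,b[i]):=(a\approx c,c)$. CongR: $\mathcal I\models i\approx k$, $\pi(a,b[i])\ne()$, $\pi(a,c[k])\ne()$, $\mathcal I\models b[i]\not\approx c[k]$ ⟹ add $\mathcal R(a,b[i])\wedge\mathcal R(a,c[k])\wedge i\approx k\Rightarrow b[i]\approx c[k]$ to $A$, reset. DisEq: $\mathcal I\models a\not\approx c$, $a,c\in T_{\mathcal A}(A)$, $a\approx c\in T(A)$, $k_{\{a,c\}}\notin T(A)$ ⟹ add $a\not\approx c\Rightarrow a[k_{\{a,c\}}]\not\approx c[k_{\{a,c\}}]$ (fresh index constant $k_{\{a,c\}}$), reset. Roc: $\pi(\langle v\rangle,b[i])\ne()$, $\mathcal I\models b[i]\not\approx v$ ⟹ add $\mathcal R(\langle v\rangle,b[i])\Rightarrow b[i]\approx v$, reset. InitC: $\langle v\rangle\in T(A)$ ⟹ $\pi(\langle v\rangle,\langle v\rangle):=(\top,\langle v\rangle)$. CowD: $\pi(a\langle j\triangleleft u\rangle,\langle v\rangle)\ne()$, $\pi(a,\langle v\rangle)=()$, $\mathcal I\models\exists i{:}\sigma.\bigwedge_{k\in I(a\langle j\triangleleft u\rangle,\langle v\rangle)\cup\{j\}}i\not\approx k$ ⟹ $\pi(a,\langle v\rangle):=(\top,a\langle j\triangleleft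 u\rangle)$. CowU: $\pi(a,\langle v\rangle)\ne()$, $\pi(a\langle j\triangleleft u\rangle,\langle v\rangle)=()$, $a\langle j\triangleleft u\rangle\in T(A)$, $\mathcal I\models\exists i{:}\sigma.\bigwedge_{k\in I(a,\langle v\rangle)\cup\{j\}}i\not\approx k$ ⟹ $\pi(a\langle j\triangleleft u\rangle,\langle v\rangle):=(\top,a)$. CEqR: $\mathcal I\models a\approx c$, $a,c\in T_{\mathcal A}(A)$, $a\approx c\in T(A)$, $\pi(a,\langle v\rangle)\ne()$, $\pi(c,\langle v\rangle)=()$ ⟹ $\pi(c,\langle v\rangle):=(a\approx c,a)$. CEqL: symmetric, $\pi(a,\langle v\rangle):=(a\approx c,c)$. CongC: $\pi(a,\langle v\rangle)\ne()$, $\pi(a,\langle w\rangle)\ne()$, $\mathcal I\models v\not\approx w$, $\mathcal I\models\exists i{:}\sigma.\bigwedge_{k\in I(a,\langle v\rangle)\cup I(a,\langle w\rangle)}i\not\approx k$ ⟹ add $\mathcal R(a,\langle v\rangle)\wedge\mathcal R(a,\langle w\rangle)\wedge\exists i{:}\sigma.\bigwedge_{k\in I(a,\langle v\rangle)\cup I(a,\langle w\rangle)}i\not\approx k\Rightarrow v\approx w$, reset. Conflict rules: CongR, DisEq, Roc, CongC. A derivation is a sequence of configurations starting from an initial configuration, each obtained from the previous by a rule application. *)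

theory Defs
  imports Main
begin

datatype srt = SIdx | SElem | SArr

datatype trm =
    Cst string srt
  | Rd trm trm
  | Wr trm trm trm
  | CArr trm
  | Kd trm trm                \<comment> \<open>fresh index constant k_{a,c} introduced by DisEq\<close>

fun sort_of :: "trm \<Rightarrow> srt" where
  "sort_of (Cst n s) = s"
| "sort_of (Rd a i) = SElem"
| "sort_of (Wr a i u) = SArr"
| "sort_of (CArr v) = SArr"
| "sort_of (Kd a c) = SIdx"

text \<open>Quantifier-free formulas, plus the only quantified shape used by CongC:
  FExD ks  stands for  \<exists>i:\<sigma>. \<And>k\<in>set ks. i \<noteq> k.\<close>
datatype fml =
    FTop | FBot
  | FEq trm trm
  | FNeg fml
  | FAnd fml fml
  | FOr fml fml
  | FImp fml fml
  | FExD "trm list"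

fun subt :: "trm \<Rightarrow> trm set" where
  "subt (Cst n s) = {Cst n s}"
| "subt (Rd a i) = insert (Rd a i) (subt a \<union> subt i)"
| "subt (Wr a i u) = insert (Wr a i u) (subt a \<union> subt i \<union> subt u)"
| "subt (CArr v) = insert (CArr v) (subt v)"
| "subt (Kd a c) = {Kd a c}"

fun fterms :: "fml \<Rightarrow> trm set" where
  "fterms FTop = {}"
| "fterms FBot = {}"
| "fterms (FEq s t) = subt s \<union> subt t"
| "fterms (FNeg p) = fterms p"
| "fterms (FAnd p q) = fterms p \<union> fterms q"
| "fterms (FOr p q) = fterms p \<union> fterms q"
| "fterms (FImp p q) = fterms p \<union> fterms q"
| "fterms (FExD ks) = (\<Union>k\<in>set ks. subt k)"

fun fatoms :: "fml \<Rightarrow> fml set" where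
  "fatoms FTop = {}"
| "fatoms FBot = {}"
| "fatoms (FEq s t) = {FEq s t}"
| "fatoms (FNeg p) = fatoms p"
| "fatoms (FAnd p q) = fatoms p \<union> fatoms q"
| "fatoms (FOr p q) = fatoms p \<union> fatoms q"
| "fatoms (FImp p q) = fatoms p \<union> fatoms q"
| "fatoms (FExD ks) = {}"

definition T :: "fml set \<Rightarrow> trm set" where
  "T A = (\<Union>p\<in>A. fterms p)"

definition TA :: "fml set \<Rightarrow> trm set" where
  "TA A = {t \<in> T A. sort_of t = SArr}"

definition atomsA :: "fml set \<Rightarrow> fml set" where
  "atomsA A = (\<Union>p\<in>A. fatoms p)"

definition W :: "fml set \<Rightarrow> fml set" where
  "W A = {FEq (Rd (Wr a i u) i) u | a i u. Wr a i u \<in> T A}"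

record 'v interp =
  dom :: "srt \<Rightarrow> 'v set"
  cst :: "string \<Rightarrow> srt \<Rightarrow> 'v"
  rd  :: "'v \<Rightarrow> 'v \<Rightarrow> 'v"
  wr  :: "'v \<Rightarrow> 'v \<Rightarrow> 'v \<Rightarrow> 'v"
  ca  :: "'v \<Rightarrow> 'v"
  kd  :: "trm \<Rightarrow> trm \<Rightarrow> 'v"

definition wf_interp :: "'v interp \<Rightarrow> bool" where
  "wf_interp J \<longleftrightarrow>
     (\<forall>s. dom J s \<noteq> {}) \<and>
     (\<forall>n s. cst J n s \<in> dom J s) \<and>
     (\<forall>a c. kd J a c \<in> dom J SIdx) \<and>
     (\<forall>x\<in>dom J SArr. \<forall>i\<in>dom J SIdx. rd J x i \<in> dom J SElem) \<and>
     (\<forall>x\<in>dom J SArr. \<forall>i\<in>dom J SIdx. \<forall>e\<in>dom J SElem. wr J x i e \<in> dom J SArr) \<and>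
     (\<forall>e\<in>dom J SElem. ca J e \<in> dom J SArr)"

fun eval :: "'v interp \<Rightarrow> trm \<Rightarrow> 'v" where
  "eval J (Cst n s) = cst J n s"
| "eval J (Rd a i) = rd J (eval J a) (eval J i)"
| "eval J (Wr a i u) = wr J (eval J a) (eval J i) (eval J u)"
| "eval J (CArr v) = ca J (eval J v)"
| "eval J (Kd a c) = kd J a c"

fun sat :: "'v interp \<Rightarrow> fml \<Rightarrow> bool" where
  "sat J FTop = True"
| "sat J FBot = False"
| "sat J (FEq s t) = (eval J s = eval J t)"
| "sat J (FNeg p) = (\<not> sat J p)"
| "sat J (FAnd p q) = (sat J p \<and> sat J q)"
| "sat J (FOr p q) = (sat J p \<or> sat J q)"
| "sat J (FImp p q) = (sat J p \<longrightarrow> sat J q)"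
| "sat J (FExD ks) = (\<exists>x\<in>dom J SIdx. \<forall>k\<in>set ks. x \<noteq> eval J k)"

text \<open>The current interpretation: None is I_0; premises "I |= phi" require I \<noteq> I_0.\<close>
definition models :: "'v interp option \<Rightarrow> fml \<Rightarrow> bool" where
  "models I p \<longleftrightarrow> (\<exists>J. I = Some J \<and> sat J p)"

definition satisfiable :: "'v itself \<Rightarrow> fml set \<Rightarrow> bool" where
  "satisfiable _ A \<longleftrightarrow> (\<exists>J :: 'v interp. wf_interp J \<and> (\<forall>p\<in>A. sat J p))"

type_synonym pmap = "trm \<Rightarrow> trm \<Rightarrow> (fml \<times> trm) option"

definition pi0 :: pmap where "pi0 = (\<lambda>a t. None)"

definition upd :: "pmap \<Rightarrow> trm \<Rightarrow> trm \<Rightarrow> fml \<times> trm \<Rightarrow> pmap" where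
  "upd \<pi> a t x = \<pi>(a := (\<pi> a)(t := Some x))"

text \<open>Rsn \<pi> a t r  :  R(a,t) is defined and equals r (the recursive definition of the paper).\<close>
inductive Rsn :: "pmap \<Rightarrow> trm \<Rightarrow> trm \<Rightarrow> fml \<Rightarrow> bool" where
  rsn_self: "\<pi> a t \<noteq> None \<Longrightarrow> t = a \<Longrightarrow> Rsn \<pi> a t FTop"
| rsn_read: "\<pi> a t \<noteq> None \<Longrightarrow> t = Rd a i \<Longrightarrow> Rsn \<pi> a t FTop"
| rsn_step: "\<pi> a t = Some (r, c) \<Longrightarrow> t \<noteq> a \<Longrightarrow> (\<forall>i. t \<noteq> Rd a i) \<Longrightarrow>
             Rsn \<pi> c t r' \<Longrightarrow> Rsn \<pi> a t (FAnd r' r)"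

text \<open>Upd \<pi> a t S : I(a,t) is defined and equals S (t a constant-array term).\<close>
inductive Upd :: "pmap \<Rightarrow> trm \<Rightarrow> trm \<Rightarrow> trm set \<Rightarrow> bool" where
  upd_self: "\<pi> a t \<noteq> None \<Longrightarrow> a = t \<Longrightarrow> Upd \<pi> a t {}"
| upd_wr: "\<pi> a t = Some (FTop, b) \<Longrightarrow> a \<noteq> t \<Longrightarrow>
           (\<exists>u. b = Wr a j u) \<or> (\<exists>u. a = Wr b j u) \<Longrightarrow>
           Upd \<pi> b t S \<Longrightarrow> Upd \<pi> a t (insert j S)"
| upd_other: "\<pi> a t = Some (r, c) \<Longrightarrow> a \<noteq> t \<Longrightarrow>
           \<not> (r = FTop \<and> (\<exists>j u. c = Wr a j u \<or> a = Wr c j u)) \<Longrightarrow>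
           Upd \<pi> c t S \<Longrightarrow> Upd \<pi> a t S"

datatype 'v config = Unsat | Cfg "fml set" "'v interp option" pmap

definition initial :: "fml set \<Rightarrow> 'v config" where
  "initial A = Cfg A None pi0"

inductive step :: "'v config \<Rightarrow> 'v config \<Rightarrow> bool" where
  Interp: "wf_interp J \<Longrightarrow> (\<forall>p\<in>A \<union> W A. sat J p) \<Longrightarrow>
     step (Cfg A None \<pi>) (Cfg A (Some J) \<pi>)"
| Conf: "\<not> satisfiable TYPE('v) (A \<union> W A) \<Longrightarrow>
     step (Cfg A (I :: 'v interp option) \<pi>) Unsat"
| InitR: "Rd a i \<in> T A \<Longrightarrow>
     step (Cfg A I \<pi>) (Cfg A I (upd \<pi> a (Rd a i) (FTop, a)))"
| InitW: "s = Wr a i u \<Longrightarrow> s \<in> T A \<Longrightarrow>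
     step (Cfg A I \<pi>) (Cfg A I (upd \<pi> s (Rd s i) (FTop, s)))"
| RowD: "models I (FNeg (FEq i j)) \<Longrightarrow> \<pi> (Wr a j u) (Rd b i) \<noteq> None \<Longrightarrow>
     \<pi> a (Rd b i) = None \<Longrightarrow>
     step (Cfg A I \<pi>) (Cfg A I (upd \<pi> a (Rd b i) (FNeg (FEq i j), Wr a j u)))"
| RowU: "models I (FNeg (FEq i j)) \<Longrightarrow> Wr a j u \<in> T A \<Longrightarrow>
     \<pi> a (Rd b i) \<noteq> None \<Longrightarrow> \<pi> (Wr a j u) (Rd b i) = None \<Longrightarrow>
     step (Cfg A I \<pi>) (Cfg A I (upd \<pi> (Wr a j u) (Rd b i) (FNeg (FEq i j), a)))"
| EqR: "models I (FEq a c) \<Longrightarrow> a \<in> TA A \<Longrightarrow> c \<in> TA A \<Longrightarrow> FEq a c \<in> atomsA A \<Longrightarrow>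
     \<pi> a (Rd b i) \<noteq> None \<Longrightarrow> \<pi> c (Rd b i) = None \<Longrightarrow>
     step (Cfg A I \<pi>) (Cfg A I (upd \<pi> c (Rd b i) (FEq a c, a)))"
| EqL: "models I (FEq a c) \<Longrightarrow> a \<in> TA A \<Longrightarrow> c \<in> TA A \<Longrightarrow> FEq a c \<in> atomsA A \<Longrightarrow>
     \<pi> c (Rd b i) \<noteq> None \<Longrightarrow> \<pi> a (Rd b i) = None \<Longrightarrow>
     step (Cfg A I \<pi>) (Cfg A I (upd \<pi> a (Rd b i) (FEq a c, c)))"
| CongR: "models I (FEq i k) \<Longrightarrow> \<pi> a (Rd b i) \<noteq> None \<Longrightarrow> \<pi> a (Rd c k) \<noteq> None \<Longrightarrow>
     models I (FNeg (FEq (Rd b i) (Rd c k))) \<Longrightarrow>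
     Rsn \<pi> a (Rd b i) r1 \<Longrightarrow> Rsn \<pi> a (Rd c k) r2 \<Longrightarrow>
     step (Cfg A I \<pi>)
       (Cfg (insert (FImp (FAnd (FAnd r1 r2) (FEq i k)) (FEq (Rd b i) (Rd c k))) A) None pi0)"
| DisEq: "models I (FNeg (FEq a c)) \<Longrightarrow> a \<in> TA A \<Longrightarrow> c \<in> TA A \<Longrightarrow> FEq a c \<in> atomsA A \<Longrightarrow>
     Kd a c \<notin> T A \<Longrightarrow> Kd c a \<notin> T A \<Longrightarrow>
     step (Cfg A I \<pi>)
       (Cfg (insert (FImp (FNeg (FEq a c)) (FNeg (FEq (Rd a (Kd a c)) (Rd c (Kd a c))))) A)
            None pi0)"
| Roc: "\<pi> (CArr v) (Rd b i) \<noteq> None \<Longrightarrow> models I (FNeg (FEq (Rd b i) v)) \<Longrightarrow>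
     Rsn \<pi> (CArr v) (Rd b i) r \<Longrightarrow>
     step (Cfg A I \<pi>) (Cfg (insert (FImp r (FEq (Rd b i) v)) A) None pi0)"
| InitC: "CArr v \<in> T A \<Longrightarrow>
     step (Cfg A I \<pi>) (Cfg A I (upd \<pi> (CArr v) (CArr v) (FTop, CArr v)))"
| CowD: "\<pi> (Wr a j u) (CArr v) \<noteq> None \<Longrightarrow> \<pi> a (CArr v) = None \<Longrightarrow>
     Upd \<pi> (Wr a j u) (CArr v) S \<Longrightarrow> set ks = insert j S \<Longrightarrow> models I (FExD ks) \<Longrightarrow>
     step (Cfg A I \<pi>) (Cfg A I (upd \<pi> a (CArr v) (FTop, Wr a j u)))"
| CowU: "\<pi> a (CArr v) \<noteq> None \<Longrightarrow> \<pi> (Wr a j u) (CArr v) = None \<Longrightarrow> Wr a j u \<in> T A \<Longrightarrow>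
     Upd \<pi> a (CArr v) S \<Longrightarrow> set ks = insert j S \<Longrightarrow> models I (FExD ks) \<Longrightarrow>
     step (Cfg A I \<pi>) (Cfg A I (upd \<pi> (Wr a j u) (CArr v) (FTop, a)))"
| CEqR: "models I (FEq a c) \<Longrightarrow> a \<in> TA A \<Longrightarrow> c \<in> TA A \<Longrightarrow> FEq a c \<in> atomsA A \<Longrightarrow>
     \<pi> a (CArr v) \<noteq> None \<Longrightarrow> \<pi> c (CArr v) = None \<Longrightarrow>
     step (Cfg A I \<pi>) (Cfg A I (upd \<pi> c (CArr v) (FEq a c, a)))"
| CEqL: "models I (FEq a c) \<Longrightarrow> a \<in> TA A \<Longrightarrow> c \<in> TA A \<Longrightarrow> FEq a c \<in> atomsA A \<Longrightarrow>
     \<pi> c (CArr v) \<noteq> None \<Longrightarrow> \<pi> a (CArr v) = None \<Longrightarrow>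
     step (Cfg A I \<pi>) (Cfg A I (upd \<pi> a (CArr v) (FEq a c, c)))"
| CongC: "\<pi> a (CArr v) \<noteq> None \<Longrightarrow> \<pi> a (CArr w) \<noteq> None \<Longrightarrow> models I (FNeg (FEq v w)) \<Longrightarrow>
     Upd \<pi> a (CArr v) S1 \<Longrightarrow> Upd \<pi> a (CArr w) S2 \<Longrightarrow> set ks = S1 \<union> S2 \<Longrightarrow>
     models I (FExD ks) \<Longrightarrow>
     Rsn \<pi> a (CArr v) r1 \<Longrightarrow> Rsn \<pi> a (CArr w) r2 \<Longrightarrow>
     step (Cfg A I \<pi>)
       (Cfg (insert (FImp (FAnd (FAnd r1 r2) (FExD ks)) (FEq v w)) A) None pi0)"

definition derivation_to :: "fml set \<Rightarrow> 'v config \<Rightarrow> bool" where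
  "derivation_to A0 C \<longleftrightarrow> step\<^sup>*\<^sup>* (initial A0) C"

definition propagated :: "trm \<Rightarrow> bool" where
  "propagated t \<longleftrightarrow> (\<exists>b i. t = Rd b i) \<or> (\<exists>v. t = CArr v)"

end

theory Submission
  imports Defs
begin

text \<open>Every reason recorded in \<pi> holds in the current interpretation. A propagation rule only
  extends a reason by a premise it has just checked in I. While I is none, only InitR, InitW
  and InitC can fire, and their reasons are trivially true, so they survive whatever
  interpretation Interp picks; the conflict rules reset I and \<pi> together.\<close>

definition rsn_base :: "trm \<Rightarrow> trm \<Rightarrow> bool" where
  "rsn_base a t \<longleftrightarrow> t = a \<or> (\<exists>i. t = Rd a i)"

definition reasons_hold :: "'v interp \<Rightarrow> pmap \<Rightarrow> bool" where
  "reasons_hold J \<pi> \<longleftrightarrow> (\<forall>a t. \<pi> a t \<noteq> None \<longrightarrow> (\<exists>r. Rsn \<pi> a t r \<and> sat J r))"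

definition sound_config :: "'v config \<Rightarrow> bool" where
  "sound_config C \<longleftrightarrow> (case C of
     Unsat \<Rightarrow> True
   | Cfg A I \<pi> \<Rightarrow> (\<forall>J. I = None \<or> I = Some J \<longrightarrow> reasons_hold J \<pi>))"

lemma upd_eq_same [simp]: "upd \<pi> a t v a t = Some v"
  by (simp add: upd_def)

lemma upd_eq_other [simp]: "(x, s) \<noteq> (a, t) \<Longrightarrow> upd \<pi> a t v x s = \<pi> x s"
  by (auto simp: upd_def)

lemma upd_not_None: "\<pi> x s \<noteq> None \<Longrightarrow> upd \<pi> a t v x s \<noteq> None"
  by (cases "(x, s) = (a, t)") auto

lemma Rsn_base: "rsn_base a t \<Longrightarrow> \<pi> a t \<noteq> None \<Longrightarrow> Rsn \<pi> a t FTop"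
  unfolding rsn_base_def by (auto intro: Rsn.intros)

lemma Rsn_upd_fresh:
  "Rsn \<pi> x s r \<Longrightarrow> \<pi> a t = None \<Longrightarrow> Rsn (upd \<pi> a t v) x s r"
proof (induction rule: Rsn.induct)
  case (rsn_self \<pi> x s)
  then show ?case by (intro Rsn.rsn_self upd_not_None)
next
  case (rsn_read \<pi> x s i)
  then show ?case by (intro Rsn.rsn_read upd_not_None)
next
  case (rsn_step \<pi> x s r c r')
  then have "(x, s) \<noteq> (a, t)" by auto
  with rsn_step show ?case by (intro Rsn.rsn_step) auto
qed

text \<open>A chain of reasons never passes through a base entry, so overwriting one is harmless.\<close>

lemma Rsn_upd_base:
  "Rsn \<pi> x s r \<Longrightarrow> rsn_base a t \<Longrightarrow> Rsn (upd \<pi> a t v) x s r"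
proof (induction rule: Rsn.induct)
  case (rsn_self \<pi> x s)
  then show ?case by (intro Rsn.rsn_self upd_not_None)
next
  case (rsn_read \<pi> x s i)
  then show ?case by (intro Rsn.rsn_read upd_not_None)
next
  case (rsn_step \<pi> x s r c r')
  then have "(x, s) \<noteq> (a, t)" by (auto simp: rsn_base_def)
  with rsn_step show ?case by (intro Rsn.rsn_step) auto
qed

lemma reasons_hold_pi0: "reasons_hold J pi0"
  by (simp add: reasons_hold_def pi0_def)

lemma reasons_hold_upd_base:
  assumes "reasons_hold J \<pi>" and "rsn_base a t"
  shows "reasons_hold J (upd \<pi> a t v)"
  unfolding reasons_hold_def
proof (intro allI impI)
  fix x s
  assume defined: "upd \<pi> a t v x s \<noteq> None"
  show "\<exists>r. Rsn (upd \<pi> a t v) x s r \<and> sat J r"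
  proof (cases "(x, s) = (a, t)")
    case True
    with assms(2) have "Rsn (upd \<pi> a t v) x s FTop" by (simp add: Rsn_base)
    then show ?thesis by auto
  next
    case False
    with defined assms(1) obtain r where "Rsn \<pi> x s r" "sat J r"
      unfolding reasons_hold_def by force
    with assms(2) show ?thesis by (blast intro: Rsn_upd_base)
  qed
qed

lemma reasons_hold_upd_fresh:
  assumes "reasons_hold J \<pi>" and "\<pi> a t = None" and "\<pi> c t \<noteq> None" and "sat J r0"
  shows "reasons_hold J (upd \<pi> a t (r0, c))"
  unfolding reasons_hold_def
proof (intro allI impI)
  fix x s
  assume defined: "upd \<pi> a t (r0, c) x s \<noteq> None"
  show "\<exists>r. Rsn (upd \<pi> a t (r0, c)) x s r \<and> sat J r"
  proof (cases "(x, s) = (a, t)")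
    case new: True
    show ?thesis
    proof (cases "rsn_base a t")
      case True
      with new have "Rsn (upd \<pi> a t (r0, c)) x s FTop" by (simp add: Rsn_base)
      then show ?thesis by auto
    next
      case False
      from assms(1,3) obtain r where "Rsn \<pi> c t r" "sat J r"
        unfolding reasons_hold_def by blast
      with False assms(2) have "Rsn (upd \<pi> a t (r0, c)) a t (FAnd r r0)"
        by (intro Rsn.rsn_step) (auto simp: rsn_base_def intro: Rsn_upd_fresh)
      with new \<open>sat J r\<close> assms(4) show ?thesis by auto
    qed
  next
    case False
    with defined assms(1) obtain r where "Rsn \<pi> x s r" "sat J r"
      unfolding reasons_hold_def by force
    with assms(2) show ?thesis by (blast intro: Rsn_upd_fresh)
  qed
qed

lemma sound_config_upd_base:
  "sound_config (Cfg A I \<pi>) \<Longrightarrow> rsn_base a t \<Longrightarrow> sound_config (Cfg A I (upd \<pi> a t v))"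
  by (simp add: sound_config_def reasons_hold_upd_base)

lemma sound_config_upd_fresh:
  assumes "sound_config (Cfg A I \<pi>)" and "models I r0"
    and "\<pi> a t = None" and "\<pi> c t \<noteq> None"
  shows "sound_config (Cfg A I (upd \<pi> a t (r0, c)))"
proof -
  from assms(2) obtain J where "I = Some J" "sat J r0"
    by (auto simp: models_def)
  with assms show ?thesis
    by (auto simp: sound_config_def intro: reasons_hold_upd_fresh)
qed

lemma sound_config_reset: "sound_config (Cfg A None pi0)"
  by (simp add: sound_config_def reasons_hold_pi0)

lemma sound_config_step: "step C C' \<Longrightarrow> sound_config C \<Longrightarrow> sound_config C'"
proof (induction rule: step.induct)
  case (Interp J A \<pi>)
  then show ?case by (simp add: sound_config_def)
next
  case (Conf A I \<pi>)
  then show ?case by (simp add: sound_config_def)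
next
  case (InitR a i A I \<pi>)
  then show ?case by (intro sound_config_upd_base) (auto simp: rsn_base_def)
next
  case (InitW s a i u A I \<pi>)
  then show ?case by (intro sound_config_upd_base) (auto simp: rsn_base_def)
next
  case (InitC v A I \<pi>)
  then show ?case by (intro sound_config_upd_base) (auto simp: rsn_base_def)
next
  case (CowD \<pi> a j u v S ks I A)
  then have "models I FTop" by (auto simp: models_def)
  with CowD show ?case by (intro sound_config_upd_fresh)
next
  case (CowU \<pi> a v j u A S ks I)
  then have "models I FTop" by (auto simp: models_def)
  with CowU show ?case by (intro sound_config_upd_fresh)
qed (auto intro: sound_config_upd_fresh sound_config_reset)

lemma sound_config_steps: "step\<^sup>*\<^sup>* C C' \<Longrightarrow> sound_config C \<Longrightarrow> sound_config C'"
  by (induction rule: rtranclp_induct) (auto intro: sound_config_step)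

theorem mainTheorem7:
  fixes A0 A :: "fml set" and I :: "'v interp option" and \<pi> :: pmap and a t :: trm
  assumes "derivation_to A0 (Cfg A I \<pi>)"
    and "sort_of a = SArr"
    and "propagated t"
    and "I \<noteq> None"
    and "\<pi> a t \<noteq> None"
  shows "\<exists>r. Rsn \<pi> a t r \<and> models I r"
proof -
  have "sound_config (initial A0 :: 'v config)"
    by (simp add: initial_def sound_config_reset)
  with assms(1) have "sound_config (Cfg A I \<pi>)"
    unfolding derivation_to_def by (rule sound_config_steps)
  moreover from assms(4) obtain J where "I = Some J" by blast
  ultimately have "reasons_hold J \<pi>"
    by (simp add: sound_config_def)
  with assms(5) \<open>I = Some J\<close> show ?thesis
    by (auto simp: reasons_hold_def models_def)
qed

end
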